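(* Let $N\ge2$ and $\mathcal M=(M_{ij})_{1\le i<j\le N}$ a family of real symmetric $2\times2$ matrices. If $Y=\Psi(\mathcal M)\in DD_N$, then $-\phi_{DD}(\mathcal M)\ge-\phi_{SDD}(\mathcal M)\ge -h(Y)$. Moreover, if $M_{ij}=\frac{1}{N-1}I_{2}$ for all $i<j$, then $Y=\Psi(\mathcal M)=I$ and $-\phi_{DD}(\mathcal M)=-\phi_{SDD}(\mathcal M)=-h(Y)=N(N-1)\log(N-1)$.
   Context: $\Psi(\mathcal M)=\sum_{i<j}\Psi_{ij}(M_{ij})$, where $\Psi_{ij}(M)$ is the $N\times N$ matrix whose entries $(i,i),(i,j),(j,i),(j,j)$ are $M(1,1),M(1,2),M(2,1),M(2,2)$ and whose other entries are $0$. $\phi_{DD}(\mathcal M)=\frac12\sum_{i<j}\big[\log(M_{ij}(1,1)^2-M_{ij}(1,2)^2)+\log(M_{ij}(2,2)^2-M_{ij}(1,2)^2)\big]$ with domain $\{M_{ij}(1,1)>|M_{ij}(1,2)|,\ M_{ij}(2,2)>|M_{ij}(1,2)|\ \forall i<j\}$; $\phi_{SDD}(\mathcal M)=\sum_{i<j}\log\big(M_{ij}(1,1)M_{ij}(2,2)-M_{ij}(1,2)^2\big)$ with domain $\{M_{ij}\succ0\}$; $h(Y)=(N-1)\log\det Y-N(N-1)\log(N-1)$ for $Y\succ0$; outside their domains these functions equal $-\infty$. $DD_N$: symmetric $X$ with $X(i,i)\ge\sum_{j\ne i}|X(i,j)|$ for all $i$; $SDD_N$: matrices $DYD$, $D$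 positive diagonal, $Y\in DD_N$. *)

theory Defs
  imports "HOL-Analysis.Analysis" "HOL-Library.Extended_Real"
begin

(* Index set {1..N} is modelled by a finite linearly ordered type 'n, N = CARD('n).
   A 2x2 matrix M is real^2^2 with entries M $ 1 $ 1, M $ 1 $ 2, M $ 2 $ 1, M $ 2 $ 2
   (in type 2, the indices 1 and 2 are the two distinct elements). *)

definition pairs :: "('n::{finite,linorder} \<times> 'n) set" where
  "pairs = {(i,j). i < j}"

definition Psi :: "('n::{finite,linorder} \<Rightarrow> 'n \<Rightarrow> real^2^2) \<Rightarrow> ((real,'n) vec, 'n) vec" where
  "Psi M = (\<chi> a b. \<Sum>(i,j)\<in>pairs.
      (if a = i \<and> b = i then M i j $ 1 $ 1
       else if a = i \<and> b = j then M i j $ 1 $ 2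
       else if a = j \<and> b = i then M i j $ 2 $ 1
       else if a = j \<and> b = j then M i j $ 2 $ 2
       else 0))"

definition sym_mat :: "real^'m^'m \<Rightarrow> bool" where
  "sym_mat A \<longleftrightarrow> transpose A = A"

definition pos_def :: "real^'m^'m \<Rightarrow> bool" where
  "pos_def A \<longleftrightarrow> sym_mat A \<and> (\<forall>x. x \<noteq> 0 \<longrightarrow> x \<bullet> (A *v x) > 0)"

definition DD :: "(real^'n^'n) set" where
  "DD = {X. sym_mat X \<and> (\<forall>i. X $ i $ i \<ge> (\<Sum>j\<in>UNIV - {i}. \<bar>X $ i $ j\<bar>))}"

definition phi_DD :: "('n::{finite,linorder} \<Rightarrow> 'n \<Rightarrow> real^2^2) \<Rightarrow> ereal" where
  "phi_DD M = (if (\<forall>(i,j)\<in>pairs. M i j $ 1 $ 1 > \<bar>M i j $ 1 $ 2\<bar> \<and> M i j $ 2 $ 2 > \<bar>M i j $ 1 $ 2\<bar>)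
     then ereal ((1/2) * (\<Sum>(i,j)\<in>pairs.
        ln ((M i j $ 1 $ 1)^2 - (M i j $ 1 $ 2)^2) + ln ((M i j $ 2 $ 2)^2 - (M i j $ 1 $ 2)^2)))
     else -\<infinity>)"

definition phi_SDD :: "('n::{finite,linorder} \<Rightarrow> 'n \<Rightarrow> real^2^2) \<Rightarrow> ereal" where
  "phi_SDD M = (if (\<forall>(i,j)\<in>pairs. pos_def (M i j))
     then ereal (\<Sum>(i,j)\<in>pairs. ln (M i j $ 1 $ 1 * M i j $ 2 $ 2 - (M i j $ 1 $ 2)^2))
     else -\<infinity>)"

definition h :: "real^'n^'n \<Rightarrow> ereal" where
  "h Y = (if pos_def Y
     then ereal ((real CARD('n) - 1) * ln (det Y)
                 - real CARD('n) * (real CARD('n) - 1) * ln (real CARD('n) - 1))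
     else -\<infinity>)"

end

theory Submission
  imports Defs
begin

(* The first inequality holds termwise, since (a^2 - b^2)(d^2 - b^2) \<le> (a d - b^2)^2.
   For the second, let S be the inverse of Y = Psi M; it is positive definite.  For every pair
   i < j, the 2 x 2 principal submatrix S_ij of S satisfies 4 det S_ij det M_ij \<le> tr(S_ij M_ij)^2,
   and these traces add up to tr(S Y) = N, so concavity of ln bounds the sum of their logarithms.
   The remaining term, the sum of ln det S_ij, is bounded below by (N - 1) ln det S (a Szasz-type
   inequality), which follows by applying Hadamard's inequality to the Schur complement of each
   diagonal entry. *)

lemma sym_mat_entry: "sym_mat A \<Longrightarrow> A $ i $ j = A $ j $ i"
  unfolding sym_mat_def by (metis transpose_def vec_lambda_beta)

lemma pos_def_entry_sym: "pos_def A \<Longrightarrow> A $ i $ j = A $ j $ i"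
  unfolding pos_def_def using sym_mat_entry by blast

lemma pos_def_diag_pos:
  fixes P :: "real^'n::finite^'n"
  assumes "pos_def P"
  shows "P $ k $ k > 0"
proof -
  have "axis k (1::real) \<bullet> (P *v axis k 1) > 0"
    using assms unfolding pos_def_def by simp
  moreover have "axis k (1::real) \<bullet> (P *v axis k 1) = P $ k $ k"
    unfolding inner_axis' matrix_vector_mult_basis by (simp add: column_def)
  ultimately show ?thesis by simp
qed

lemma pos_def_congruence:
  fixes P G :: "real^'n::finite^'n"
  assumes P: "pos_def P" and G: "det G \<noteq> 0"
  shows "pos_def (G ** P ** transpose G)"
  unfolding pos_def_def
proof (intro conjI allI impI)
  show "sym_mat (G ** P ** transpose G)"
    using P unfolding pos_def_def sym_mat_def
    by (simp add: matrix_transpose_mul matrix_mul_assoc)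
  fix x :: "real^'n"
  assume "x \<noteq> 0"
  moreover have "inj ((*v) (transpose G))"
    using G by (intro inj_matrix_vector_mult) (simp add: invertible_det_nz)
  ultimately have "transpose G *v x \<noteq> 0"
    by (metis injD matrix_vector_mult_0_right)
  then have "(transpose G *v x) \<bullet> (P *v (transpose G *v x)) > 0"
    using P unfolding pos_def_def by blast
  also have "(transpose G *v x) \<bullet> (P *v (transpose G *v x)) = x \<bullet> ((G ** P ** transpose G) *v x)"
    by (simp add: dot_lmul_matrix[symmetric] matrix_vector_mul_assoc[symmetric])
  finally show "x \<bullet> ((G ** P ** transpose G) *v x) > 0" .
qed

section \<open>Hadamard's inequality\<close>

definition elim_matrix :: "real^'n^'n \<Rightarrow> 'n \<Rightarrow> real^'n^'n" where
  "elim_matrix P k =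
     (\<chi> a b. (if a = b then 1 else 0) - (if a \<noteq> k \<and> b = k then P $ a $ k / P $ k $ k else 0))"

definition schur_elim :: "real^'n^'n \<Rightarrow> 'n \<Rightarrow> real^'n^'n" where
  "schur_elim P k =
     (\<chi> a b. if a = k \<and> b = k then P $ k $ k else if a = k \<or> b = k then 0
            else P $ a $ b - P $ a $ k * P $ k $ b / P $ k $ k)"

lemma det_elim_matrix:
  fixes P :: "real^'n::finite^'n"
  shows "det (elim_matrix P k) = 1"
proof -
  let ?I = "mat 1 :: real^'n^'n"
  define x where "x = (\<Sum>a\<in>UNIV - {k}. (- (P $ a $ k / P $ k $ k)) *s row a ?I)"
  have "x \<in> vec.span {row j ?I |j. j \<noteq> k}"
    unfolding x_def by (intro vec.span_sum vec.span_scale vec.span_base) auto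
  then have "det (\<chi> r. if r = k then row k ?I + x else row r ?I) = 1"
    using det_row_span by fastforce
  moreover have "x $ b = (if b \<noteq> k then - (P $ b $ k / P $ k $ k) else 0)" for b
    by (simp add: x_def row_def mat_def if_distrib[of "\<lambda>y. _ * y"] if_distrib[of uminus] sum.If_cases
        cong: if_cong)
  then have "transpose (elim_matrix P k) = (\<chi> r. if r = k then row k ?I + x else row r ?I)"
    by (simp add: vec_eq_iff transpose_def elim_matrix_def row_def mat_def)
  ultimately show ?thesis
    by (metis det_transpose)
qed

lemma elim_matrix_congruence:
  fixes P :: "real^'n::finite^'n"
  assumes sym: "sym_mat P" and pivot: "P $ k $ k \<noteq> 0"
  shows "elim_matrix P k ** P ** transpose (elim_matrix P k) = schur_elim P k"
proof -
  have left: "(elim_matrix P k ** A) $ a $ c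
      = A $ a $ c - (if a \<noteq> k then P $ a $ k / P $ k $ k * A $ k $ c else 0)"
    for A :: "real^'n^'n" and a c
    by (simp add: elim_matrix_def matrix_matrix_mult_def left_diff_distrib sum_subtractf
        if_distrib[of "\<lambda>x. x * _"] cong: if_cong)
  have right: "(A ** transpose (elim_matrix P k)) $ a $ c
      = A $ a $ c - (if c \<noteq> k then P $ c $ k / P $ k $ k * A $ a $ k else 0)"
    for A :: "real^'n^'n" and a c
    by (simp add: elim_matrix_def matrix_matrix_mult_def transpose_def right_diff_distrib sum_subtractf
        if_distrib[of "\<lambda>x. _ * x"] cong: if_cong)
  have "(elim_matrix P k ** P) $ a $ k = (if a = k then P $ k $ k else 0)" for a
    using pivot by (simp add: left)
  then show ?thesis
    using pivot sym_mat_entry[OF sym]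
    by (simp add: vec_eq_iff left right schur_elim_def)
qed

lemma
  fixes P :: "real^'n::finite^'n"
  assumes "pos_def P"
  shows pos_def_schur_elim: "pos_def (schur_elim P k)"
    and det_schur_elim: "det (schur_elim P k) = det P"
proof -
  have "sym_mat P" and "P $ k $ k \<noteq> 0"
    using assms pos_def_diag_pos[OF assms, of k] unfolding pos_def_def by auto
  note congr = elim_matrix_congruence[OF this]
  show "pos_def (schur_elim P k)"
    using pos_def_congruence[OF assms, of "elim_matrix P k"] congr by (simp add: det_elim_matrix)
  show "det (schur_elim P k) = det P"
    unfolding congr[symmetric] det_mul by (simp add: det_elim_matrix)
qed

lemma schur_elim_diag:
  fixes P :: "real^'n::finite^'n"
  assumes "sym_mat P" and "i \<noteq> k"
  shows "schur_elim P k $ i $ i = P $ i $ i - (P $ i $ k)^2 / P $ k $ k"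
  using assms sym_mat_entry[OF assms(1), of k i] by (simp add: schur_elim_def power2_eq_square)

lemma schur_elim_diag_le:
  fixes P :: "real^'n::finite^'n"
  assumes "pos_def P"
  shows "schur_elim P k $ i $ i \<le> P $ i $ i"
proof (cases "i = k")
  case False
  have "0 \<le> (P $ i $ k)^2 / P $ k $ k"
    using pos_def_diag_pos[OF assms, of k] by simp
  then show ?thesis
    using schur_elim_diag[OF _ False] assms unfolding pos_def_def by simp
qed (simp add: schur_elim_def)

definition offdiag_rows :: "real^'n^'n \<Rightarrow> 'n set" where
  "offdiag_rows P = {a. \<exists>b. b \<noteq> a \<and> P $ a $ b \<noteq> 0}"

lemma offdiag_rows_schur_elim:
  fixes P :: "real^'n::finite^'n"
  assumes "k \<in> offdiag_rows P"
  shows "offdiag_rows (schur_elim P k) \<subset> offdiag_rows P"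
proof -
  have "a \<in> offdiag_rows P - {k}" if a: "a \<in> offdiag_rows (schur_elim P k)" for a
  proof -
    obtain b where b: "b \<noteq> a" "schur_elim P k $ a $ b \<noteq> 0"
      using a unfolding offdiag_rows_def by blast
    have "a \<noteq> k"
      using b by (auto simp: schur_elim_def)
    moreover have "b \<noteq> k"
      using b by (auto simp: schur_elim_def)
    ultimately have "P $ a $ b \<noteq> 0 \<or> P $ a $ k \<noteq> 0"
      using b(2) by (auto simp: schur_elim_def)
    then have "\<exists>c. c \<noteq> a \<and> P $ a $ c \<noteq> 0"
      using b(1) \<open>a \<noteq> k\<close> by metis
    then show ?thesis
      using \<open>a \<noteq> k\<close> by (simp add: offdiag_rows_def)
  qed
  then show ?thesis
    using assms by blast
qed

text \<open>Induction on the number of rows with a nonzero off-diagonal entry: a Schur elimination step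
  preserves positive definiteness and the determinant, decreases the diagonal, and clears a row.\<close>

lemma pos_def_det_pos_le_diag_prod:
  fixes P :: "real^'n::finite^'n"
  assumes "pos_def P"
  shows "0 < det P \<and> det P \<le> (\<Prod>i\<in>UNIV. P $ i $ i)"
  using assms
proof (induction "card (offdiag_rows P)" arbitrary: P rule: less_induct)
  case less
  show ?case
  proof (cases "offdiag_rows P = {}")
    case True
    have "P $ i $ j = 0" if "i \<noteq> j" for i j
    proof (rule ccontr)
      assume "P $ i $ j \<noteq> 0"
      then have "i \<in> offdiag_rows P"
        using that unfolding offdiag_rows_def by (intro CollectI exI[of _ j]) simp
      with True show False by simp
    qed
    then have "det P = (\<Prod>i\<in>UNIV. P $ i $ i)"
      by (rule det_diagonal)
    moreover have "0 < (\<Prod>i\<in>UNIV. P $ i $ i)"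
      by (rule prod_pos) (simp add: pos_def_diag_pos[OF less.prems])
    ultimately show ?thesis by simp
  next
    case False
    then obtain k where "k \<in> offdiag_rows P" by blast
    then have "card (offdiag_rows (schur_elim P k)) < card (offdiag_rows P)"
      by (intro psubset_card_mono offdiag_rows_schur_elim) simp_all
    from less.hyps[OF this pos_def_schur_elim[OF less.prems]]
    have IH: "0 < det P \<and> det P \<le> (\<Prod>i\<in>UNIV. schur_elim P k $ i $ i)"
      unfolding det_schur_elim[OF less.prems] .
    have "(\<Prod>i\<in>UNIV. schur_elim P k $ i $ i) \<le> (\<Prod>i\<in>UNIV. P $ i $ i)"
      by (rule prod_mono) (simp add: less_imp_le pos_def_diag_pos[OF pos_def_schur_elim[OF less.prems]]
          schur_elim_diag_le[OF less.prems])
    with IH show ?thesis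
      by linarith
  qed
qed

corollary pos_def_det_pos:
  fixes P :: "real^'n::finite^'n"
  shows "pos_def P \<Longrightarrow> 0 < det P"
  using pos_def_det_pos_le_diag_prod by blast

corollary hadamard_inequality:
  fixes P :: "real^'n::finite^'n"
  shows "pos_def P \<Longrightarrow> det P \<le> (\<Prod>i\<in>UNIV. P $ i $ i)"
  using pos_def_det_pos_le_diag_prod by blast

lemma pos_def_inverse:
  fixes Y :: "real^'n::finite^'n"
  assumes Y: "pos_def Y"
  obtains S where "S ** Y = mat 1" and "pos_def S" and "ln (det S) = - ln (det Y)"
proof -
  have "invertible Y"
    using pos_def_det_pos[OF Y] by (simp add: invertible_det_nz)
  then obtain S where SY: "S ** Y = mat 1"
    unfolding invertible_def by blast
  have "transpose Y = Y"
    using Y unfolding pos_def_def sym_mat_def by simp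
  then have "Y ** transpose S = mat 1"
    using SY by (metis matrix_transpose_mul transpose_mat)
  then have S_sym: "transpose S = S"
    by (metis SY matrix_mul_assoc matrix_mul_lid matrix_mul_rid)
  have det: "det S * det Y = 1"
    using SY by (metis det_I det_mul)
  then have "pos_def (S ** Y ** transpose S)"
    by (intro pos_def_congruence[OF Y]) auto
  then have "pos_def S"
    by (simp add: SY S_sym)
  moreover have "ln (det S) = - ln (det Y)"
    using det ln_mult_pos[OF pos_def_det_pos[OF \<open>pos_def S\<close>] pos_def_det_pos[OF Y]] by simp
  ultimately show thesis
    using SY that by blast
qed

lemma pos_def_minor2_pos:
  fixes S :: "real^'n::finite^'n"
  assumes S: "pos_def S" and "i \<noteq> j"
  shows "S $ i $ i * S $ j $ j - (S $ i $ j)^2 > 0"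
proof -
  have Sjj: "S $ j $ j > 0"
    by (rule pos_def_diag_pos[OF S])
  have "0 < schur_elim S j $ i $ i"
    by (rule pos_def_diag_pos[OF pos_def_schur_elim[OF S]])
  then have "0 < (S $ i $ i - (S $ i $ j)^2 / S $ j $ j) * S $ j $ j"
    using schur_elim_diag[OF _ \<open>i \<noteq> j\<close>] S Sjj unfolding pos_def_def by simp
  then show ?thesis
    using Sjj by (simp add: left_diff_distrib)
qed

lemma
  fixes a b d u v :: real
  assumes a: "a > 0" and det: "a * d - b^2 > 0"
  shows quadratic_form2_nonneg: "a * u^2 + 2 * b * u * v + d * v^2 \<ge> 0"
    and quadratic_form2_pos: "u \<noteq> 0 \<or> v \<noteq> 0 \<Longrightarrow> a * u^2 + 2 * b * u * v + d * v^2 > 0"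
proof -
  have completed_square:
    "a * (a * u^2 + 2 * b * u * v + d * v^2) = (a * u + b * v)^2 + (a * d - b^2) * v^2"
    by (simp add: algebra_simps power2_eq_square)
  then show "a * u^2 + 2 * b * u * v + d * v^2 \<ge> 0"
    using a det by (metis add_nonneg_nonneg less_imp_le zero_le_mult_iff zero_le_power2 not_le)
  assume "u \<noteq> 0 \<or> v \<noteq> 0"
  then have "(a * u + b * v)^2 + (a * d - b^2) * v^2 > 0"
    using a det by (cases "v = 0") (auto intro: add_nonneg_pos)
  then have "a * (a * u^2 + 2 * b * u * v + d * v^2) > 0"
    unfolding completed_square .
  then show "a * u^2 + 2 * b * u * v + d * v^2 > 0"
    using a by (simp add: zero_less_mult_iff)
qed

lemma inner_mult_vec2:
  fixes M :: "real^2^2" and x :: "real^2"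
  assumes "sym_mat M"
  shows "x \<bullet> (M *v x) = M $ 1 $ 1 * (x $ 1)^2 + 2 * M $ 1 $ 2 * x $ 1 * x $ 2 + M $ 2 $ 2 * (x $ 2)^2"
  using sym_mat_entry[OF assms, of 2 1]
  by (simp add: inner_vec_def matrix_vector_mult_def sum_2 algebra_simps power2_eq_square)

lemma pos_def2_iff:
  fixes M :: "real^2^2"
  assumes "sym_mat M"
  shows "pos_def M \<longleftrightarrow> M $ 1 $ 1 > 0 \<and> M $ 1 $ 1 * M $ 2 $ 2 - (M $ 1 $ 2)^2 > 0"
proof
  assume "pos_def M"
  then show "M $ 1 $ 1 > 0 \<and> M $ 1 $ 1 * M $ 2 $ 2 - (M $ 1 $ 2)^2 > 0"
    using pos_def_diag_pos pos_def_minor2_pos[of M 1 2] by simp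
next
  assume minors: "M $ 1 $ 1 > 0 \<and> M $ 1 $ 1 * M $ 2 $ 2 - (M $ 1 $ 2)^2 > 0"
  have "x \<bullet> (M *v x) > 0" if "x \<noteq> 0" for x :: "real^2"
  proof -
    have "x $ 1 \<noteq> 0 \<or> x $ 2 \<noteq> 0"
      using that by (metis exhaust_2 vec_eq_iff zero_index)
    then show ?thesis
      unfolding inner_mult_vec2[OF assms] using quadratic_form2_pos minors by blast
  qed
  with assms show "pos_def M"
    unfolding pos_def_def by blast
qed

text \<open>For positive definite S = [p s; s q] and M = [a b; b d], the trace of S M is positive and
  bounds 2 sqrt (det S det M); the second claim holds because p^2 times the difference is a sum of
  squares.\<close>

lemma
  fixes p q s a b d :: real
  assumes p: "p > 0" and detS: "p * q - s^2 > 0" and a: "a > 0" and detM: "a * d - b^2 > 0"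
  shows trace2_pos: "p * a + 2 * s * b + q * d > 0"
    and det2_le_trace2: "4 * (p * q - s^2) * (a * d - b^2) \<le> (p * a + 2 * s * b + q * d)^2"
proof -
  have "p^2 * ((p * a + 2 * s * b + q * d)^2 - 4 * (p * q - s^2) * (a * d - b^2))
     = (p^2 * a + 2 * p * s * b + (2 * s^2 - p * q) * d)^2 + 4 * (p * q - s^2) * (p * b + s * d)^2"
    by algebra
  also have "\<dots> \<ge> 0"
    using detS by simp
  finally show "4 * (p * q - s^2) * (a * d - b^2) \<le> (p * a + 2 * s * b + q * d)^2"
    using p by (simp add: zero_le_mult_iff)
  have "d > 0"
    using a detM by (metis diff_gt_0_iff_gt zero_le_power2 le_less_trans zero_less_mult_pos)
  have "p * (p * a + 2 * s * b + q * d) = (a * p^2 + 2 * b * p * s + d * s^2) + (p * q - s^2) * d"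
    by (simp add: algebra_simps power2_eq_square)
  also have "\<dots> > 0"
    using quadratic_form2_nonneg[OF a detM, of p s] detS \<open>d > 0\<close> by (simp add: add_nonneg_pos)
  finally show "p * a + 2 * s * b + q * d > 0"
    using p by (simp add: zero_less_mult_iff)
qed

lemma ln_det2_le_ln_trace2:
  fixes p q s a b d :: real
  assumes "p > 0" and "p * q - s^2 > 0" and "a > 0" and "a * d - b^2 > 0"
  shows "ln (a * d - b^2) \<le> 2 * ln (p * a + 2 * s * b + q * d) - ln 4 - ln (p * q - s^2)"
proof -
  let ?t = "p * a + 2 * s * b + q * d"
  have t: "?t > 0"
    using trace2_pos[OF assms] .
  have "a * d - b^2 \<le> ?t^2 / (4 * (p * q - s^2))"
    using det2_le_trace2[OF assms] assms(2) by (simp add: field_simps)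
  then have "ln (a * d - b^2) \<le> ln (?t^2 / (4 * (p * q - s^2)))"
    using assms by simp
  also have "\<dots> = 2 * ln ?t - ln 4 - ln (p * q - s^2)"
    using t assms(2) ln_mult[of 4 "p * q - s^2"] by (simp add: ln_div ln_realpow)
  finally show ?thesis .
qed

section \<open>A Szasz-type inequality\<close>

lemma sum_offdiag_eq_pairs:
  fixes g :: "'n::{finite,linorder} \<Rightarrow> 'n \<Rightarrow> real"
  assumes "\<And>i j. g i j = g j i"
  shows "(\<Sum>k\<in>UNIV. \<Sum>i\<in>UNIV - {k}. g i k) = 2 * (\<Sum>(i, j)\<in>pairs. g i j)"
proof -
  have "(\<Sum>k\<in>UNIV. \<Sum>i\<in>UNIV - {k}. g i k) = (\<Sum>(k, i)\<in>Sigma UNIV (\<lambda>k. UNIV - {k}). g i k)"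
    by (rule sum.Sigma) auto
  also have "Sigma UNIV (\<lambda>k. UNIV - {k}) = pairs \<union> prod.swap ` pairs"
    unfolding pairs_def by (auto simp: image_iff)
  also have "(\<Sum>(k, i)\<in>pairs \<union> prod.swap ` pairs. g i k)
      = (\<Sum>(k, i)\<in>pairs. g i k) + (\<Sum>(k, i)\<in>prod.swap ` pairs. g i k)"
    by (rule sum.union_disjoint) (auto simp: pairs_def)
  also have "(\<Sum>(k, i)\<in>prod.swap ` pairs. g i k) = (\<Sum>(i, j)\<in>pairs. g i j)"
    by (subst sum.reindex) (auto simp: case_prod_beta)
  also have "(\<Sum>(k, i)\<in>pairs. g i k) = (\<Sum>(i, j)\<in>pairs. g i j)"
    using assms by (simp add: case_prod_beta)
  finally show ?thesis by simp
qed

lemma sum_pairs_vertex: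
  fixes f :: "'n::{finite,linorder} \<Rightarrow> real"
  shows "(\<Sum>(i, j)\<in>pairs. f i + f j) = (real CARD('n) - 1) * (\<Sum>k\<in>UNIV. f k)"
proof -
  have "2 * (\<Sum>(i, j)\<in>pairs. f i + f j) = (\<Sum>k\<in>UNIV. \<Sum>i\<in>UNIV - {k}. f i + f k)"
    by (rule sum_offdiag_eq_pairs[symmetric]) simp
  also have "\<dots> = (\<Sum>k\<in>UNIV. (sum f UNIV - f k) + (real CARD('n) - 1) * f k)"
    by (rule sum.cong) (simp_all add: sum.distrib sum_diff1 card_Diff_singleton)
  also have "\<dots> = 2 * ((real CARD('n) - 1) * (\<Sum>k\<in>UNIV. f k))"
    by (simp add: sum.distrib sum_subtractf sum_distrib_left[symmetric]
        sum_distrib_right[symmetric] algebra_simps)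
  finally show ?thesis by simp
qed

lemma card_pairs:
  "real (card (pairs :: ('n::{finite,linorder} \<times> 'n) set)) = real CARD('n) * (real CARD('n) - 1) / 2"
  using sum_pairs_vertex[where f = "\<lambda>_::'n. 1 / 2 :: real"] by (simp add: case_prod_beta algebra_simps)

lemma ln_det_le_sum_ln_minors_at:
  fixes S :: "real^'n::finite^'n"
  assumes S: "pos_def S"
  shows "ln (det S) + (real CARD('n) - 2) * ln (S $ k $ k)
     \<le> (\<Sum>i\<in>UNIV - {k}. ln (S $ i $ i * S $ k $ k - (S $ i $ k)^2))"
proof -
  define Q where "Q = schur_elim S k"
  have sym: "sym_mat S"
    using S unfolding pos_def_def by simp
  have Skk: "S $ k $ k > 0"
    by (rule pos_def_diag_pos[OF S])
  have Q_pos: "Q $ i $ i > 0" for i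
    unfolding Q_def by (rule pos_def_diag_pos[OF pos_def_schur_elim[OF S]])
  have Q_diag: "Q $ i $ i = (S $ i $ i * S $ k $ k - (S $ i $ k)^2) / S $ k $ k" if "i \<noteq> k" for i
    using schur_elim_diag[OF sym that] Skk unfolding Q_def by (simp add: field_simps)
  have "det S \<le> (\<Prod>i\<in>UNIV. Q $ i $ i)"
    using hadamard_inequality[OF pos_def_schur_elim[OF S]] det_schur_elim[OF S] unfolding Q_def by simp
  also have "\<dots> = Q $ k $ k * (\<Prod>i\<in>UNIV - {k}. Q $ i $ i)"
    by (simp add: prod.remove)
  also have "Q $ k $ k = S $ k $ k"
    by (simp add: Q_def schur_elim_def)
  finally have "ln (det S) \<le> ln (S $ k $ k * (\<Prod>i\<in>UNIV - {k}. Q $ i $ i))"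
    using pos_def_det_pos[OF S] by (rule ln_mono)
  also have "\<dots> = ln (S $ k $ k) + (\<Sum>i\<in>UNIV - {k}. ln (Q $ i $ i))"
    using Skk Q_pos by (simp add: ln_mult_pos prod_pos ln_prod less_imp_neq[symmetric])
  also have "(\<Sum>i\<in>UNIV - {k}. ln (Q $ i $ i))
      = (\<Sum>i\<in>UNIV - {k}. ln (S $ i $ i * S $ k $ k - (S $ i $ k)^2) - ln (S $ k $ k))"
  proof (rule sum.cong[OF refl])
    fix i
    assume "i \<in> UNIV - {k}"
    then have "i \<noteq> k" by simp
    show "ln (Q $ i $ i) = ln (S $ i $ i * S $ k $ k - (S $ i $ k)^2) - ln (S $ k $ k)"
      unfolding Q_diag[OF \<open>i \<noteq> k\<close>] by (rule ln_divide_pos[OF pos_def_minor2_pos[OF S \<open>i \<noteq> k\<close>] Skk])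
  qed
  also have "\<dots> = (\<Sum>i\<in>UNIV - {k}. ln (S $ i $ i * S $ k $ k - (S $ i $ k)^2))
      - (real CARD('n) - 1) * ln (S $ k $ k)"
    by (simp add: sum_subtractf card_Diff_singleton)
  finally show ?thesis
    by (simp add: algebra_simps)
qed

lemma sum_ln_minors_le_sum_ln_diag:
  fixes S :: "((real, 'n::{finite,linorder}) vec, 'n) vec"
  assumes S: "pos_def S"
  shows "(\<Sum>(i, j)\<in>pairs. ln (S $ i $ i * S $ j $ j - (S $ i $ j)^2))
    \<le> (real CARD('n) - 1) * (\<Sum>k\<in>UNIV. ln (S $ k $ k))"
proof -
  have "(\<Sum>(i, j)\<in>pairs. ln (S $ i $ i * S $ j $ j - (S $ i $ j)^2))
      \<le> (\<Sum>(i, j)\<in>pairs. ln (S $ i $ i) + ln (S $ j $ j))"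
  proof (rule sum_mono, clarify)
    fix i j :: 'n
    assume "(i, j) \<in> pairs"
    then have "S $ i $ i * S $ j $ j - (S $ i $ j)^2 > 0"
      using pos_def_minor2_pos[OF S] by (simp add: pairs_def)
    then have "ln (S $ i $ i * S $ j $ j - (S $ i $ j)^2) \<le> ln (S $ i $ i * S $ j $ j)"
      by (intro ln_mono) simp_all
    then show "ln (S $ i $ i * S $ j $ j - (S $ i $ j)^2) \<le> ln (S $ i $ i) + ln (S $ j $ j)"
      using pos_def_diag_pos[OF S] by (simp add: ln_mult_pos)
  qed
  then show ?thesis
    unfolding sum_pairs_vertex .
qed

text \<open>Summing the bound at each k over k counts every minor twice; the leftover sum of ln S_kk is
  then eliminated with the trivial bound, which is where N \<ge> 2 enters.\<close>

lemma szasz_inequality: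
  fixes S :: "((real, 'n::{finite,linorder}) vec, 'n) vec"
  assumes S: "pos_def S" and N2: "CARD('n) \<ge> 2"
  shows "(real CARD('n) - 1) * ln (det S) \<le> (\<Sum>(i, j)\<in>pairs. ln (S $ i $ i * S $ j $ j - (S $ i $ j)^2))"
proof -
  define n where "n = real CARD('n)"
  define L where "L = (\<Sum>k\<in>UNIV. ln (S $ k $ k))"
  define P where "P = (\<Sum>(i, j)\<in>pairs. ln (S $ i $ i * S $ j $ j - (S $ i $ j)^2))"
  have "(\<Sum>k\<in>UNIV. ln (det S) + (n - 2) * ln (S $ k $ k))
      \<le> (\<Sum>k\<in>UNIV. \<Sum>i\<in>UNIV - {k}. ln (S $ i $ i * S $ k $ k - (S $ i $ k)^2))"
    unfolding n_def by (intro sum_mono ln_det_le_sum_ln_minors_at[OF S])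
  also have "\<dots> = 2 * P"
    unfolding P_def using pos_def_entry_sym[OF S] by (intro sum_offdiag_eq_pairs) (simp add: mult.commute)
  finally have sum_bound: "n * ln (det S) + (n - 2) * L \<le> 2 * P"
    by (simp add: sum.distrib n_def L_def sum_distrib_left)
  have "P \<le> (n - 1) * L"
    unfolding P_def L_def n_def by (rule sum_ln_minors_le_sum_ln_diag[OF S])
  moreover have "n \<ge> 2"
    using N2 unfolding n_def by simp
  ultimately have "(n - 2) * P \<le> (n - 2) * ((n - 1) * L)"
    and "(n - 1) * (n * ln (det S) + (n - 2) * L) \<le> (n - 1) * (2 * P)"
    using sum_bound by (intro mult_left_mono; simp)+
  then have "n * ((n - 1) * ln (det S)) \<le> n * P"
    by (simp add: algebra_simps)
  then show ?thesis
    using \<open>n \<ge> 2\<close> unfolding n_def P_def by simp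
qed

lemma sum_pair_block:
  fixes g :: "'n::finite \<Rightarrow> 'n \<Rightarrow> real"
  assumes "i \<noteq> j"
  shows "(\<Sum>a\<in>UNIV. \<Sum>b\<in>UNIV. g a b * (if a = i \<and> b = i then m11 else if a = i \<and> b = j then m12
            else if a = j \<and> b = i then m21 else if a = j \<and> b = j then m22 else 0))
       = g i i * m11 + g i j * m12 + g j i * m21 + g j j * m22"
proof -
  have "(\<Sum>b\<in>UNIV. g a b * (if a = i \<and> b = i then m11 else if a = i \<and> b = j then m12
            else if a = j \<and> b = i then m21 else if a = j \<and> b = j then m22 else 0))
     = (if a = i then g i i * m11 + g i j * m12 else 0) + (if a = j then g j i * m21 + g j j * m22 else 0)"
    for a
  proof -
    have "(\<Sum>b\<in>UNIV. g a b * (if a = i \<and> b = i then m11 else if a = i \<and> b = j then m12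
            else if a = j \<and> b = i then m21 else if a = j \<and> b = j then m22 else 0))
       = (\<Sum>b\<in>UNIV. (if a = i \<and> b = i then g i i * m11 else 0) + (if a = i \<and> b = j then g i j * m12 else 0)
            + (if a = j \<and> b = i then g j i * m21 else 0) + (if a = j \<and> b = j then g j j * m22 else 0))"
      using assms by (intro sum.cong) auto
    then show ?thesis
      using assms by (simp add: sum.distrib)
  qed
  then show ?thesis
    using assms by (simp add: sum.distrib)
qed

lemma sum_Psi_pairing:
  fixes M :: "'n::{finite,linorder} \<Rightarrow> 'n \<Rightarrow> real^2^2" and g :: "'n \<Rightarrow> 'n \<Rightarrow> real"
  shows "(\<Sum>a\<in>UNIV. \<Sum>b\<in>UNIV. g a b * Psi M $ a $ b) =
    (\<Sum>(i, j)\<in>pairs.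
      g i i * M i j $ 1 $ 1 + g i j * M i j $ 1 $ 2 + g j i * M i j $ 2 $ 1 + g j j * M i j $ 2 $ 2)"
proof -
  have "(\<Sum>a\<in>UNIV. \<Sum>b\<in>UNIV. g a b * Psi M $ a $ b)
    = (\<Sum>(i, j)\<in>pairs. \<Sum>a\<in>UNIV. \<Sum>b\<in>UNIV. g a b *
        (if a = i \<and> b = i then M i j $ 1 $ 1 else if a = i \<and> b = j then M i j $ 1 $ 2
         else if a = j \<and> b = i then M i j $ 2 $ 1 else if a = j \<and> b = j then M i j $ 2 $ 2 else 0))"
    unfolding Psi_def vec_lambda_beta sum_distrib_left case_prod_beta
    by (subst sum.swap, rule sum.cong[OF refl], rule sum.swap)
  also have "\<dots> = (\<Sum>(i, j)\<in>pairs.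
      g i i * M i j $ 1 $ 1 + g i j * M i j $ 1 $ 2 + g j i * M i j $ 2 $ 1 + g j j * M i j $ 2 $ 2)"
    by (intro sum.cong refl) (auto simp: pairs_def sum_pair_block)
  finally show ?thesis .
qed

corollary sum_Psi_pairing_sym:
  fixes M :: "'n::{finite,linorder} \<Rightarrow> 'n \<Rightarrow> real^2^2" and g :: "'n \<Rightarrow> 'n \<Rightarrow> real"
  assumes g: "\<And>a b. g a b = g b a" and symM: "\<forall>i j. i < j \<longrightarrow> sym_mat (M i j)"
  shows "(\<Sum>a\<in>UNIV. \<Sum>b\<in>UNIV. g a b * Psi M $ a $ b) =
    (\<Sum>(i, j)\<in>pairs. g i i * M i j $ 1 $ 1 + 2 * g i j * M i j $ 1 $ 2 + g j j * M i j $ 2 $ 2)"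
  unfolding sum_Psi_pairing
  using symM g[of _ _] sym_mat_entry[of "M _ _" 2 1]
  by (intro sum.cong refl) (auto simp: pairs_def)

lemma sym_mat_Psi:
  fixes M :: "'n::{finite,linorder} \<Rightarrow> 'n \<Rightarrow> real^2^2"
  assumes "\<forall>i j. i < j \<longrightarrow> sym_mat (M i j)"
  shows "sym_mat (Psi M)"
  unfolding sym_mat_def Psi_def transpose_def vec_eq_iff vec_lambda_beta
proof (intro allI sum.cong refl, clarify)
  fix a b i j :: 'n
  assume "(i, j) \<in> pairs"
  then have "i < j" "M i j $ 2 $ 1 = M i j $ 1 $ 2"
    using assms sym_mat_entry[of "M i j" 2 1] by (auto simp: pairs_def)
  then show "(if b = i \<and> a = i then M i j $ 1 $ 1 else if b = i \<and> a = j then M i j $ 1 $ 2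
              else if b = j \<and> a = i then M i j $ 2 $ 1 else if b = j \<and> a = j then M i j $ 2 $ 2 else 0) =
          (if a = i \<and> b = i then M i j $ 1 $ 1 else if a = i \<and> b = j then M i j $ 1 $ 2
              else if a = j \<and> b = i then M i j $ 2 $ 1 else if a = j \<and> b = j then M i j $ 2 $ 2 else 0)"
    by (cases "a = i"; cases "b = i"; cases "a = j"; cases "b = j") simp_all
qed

lemma inner_Psi_mult:
  fixes M :: "'n::{finite,linorder} \<Rightarrow> 'n \<Rightarrow> real^2^2" and x :: "(real, 'n) vec"
  assumes "\<forall>i j. i < j \<longrightarrow> sym_mat (M i j)"
  shows "x \<bullet> (Psi M *v x) = (\<Sum>(i, j)\<in>pairs.
    M i j $ 1 $ 1 * (x $ i)^2 + 2 * M i j $ 1 $ 2 * x $ i * x $ j + M i j $ 2 $ 2 * (x $ j)^2)"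
proof -
  have "x \<bullet> (Psi M *v x) = (\<Sum>a\<in>UNIV. \<Sum>b\<in>UNIV. (x $ a * x $ b) * Psi M $ a $ b)"
    by (simp add: inner_vec_def matrix_vector_mult_def sum_distrib_left mult_ac)
  then show ?thesis
    using sum_Psi_pairing_sym[of "\<lambda>a b. x $ a * x $ b" M] assms
    by (simp add: case_prod_beta power2_eq_square mult_ac)
qed

lemma ex_pair_nonzero_component:
  fixes x :: "(real, 'n::{finite,linorder}) vec"
  assumes "CARD('n) \<ge> 2" and "x \<noteq> 0"
  obtains i j where "i < j" and "x $ i \<noteq> 0 \<or> x $ j \<noteq> 0"
proof -
  obtain a where a: "x $ a \<noteq> 0"
    using \<open>x \<noteq> 0\<close> by (metis vec_eq_iff zero_index)
  have "\<exists>b::'n. b \<noteq> a"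
  proof (rule ccontr)
    assume "\<not> (\<exists>b::'n. b \<noteq> a)"
    then have "(UNIV :: 'n set) = {a}" by auto
    then have "CARD('n) = card {a}" by (simp only:)
    with assms(1) show False by simp
  qed
  then obtain b where "b \<noteq> a" ..
  then show thesis
    using a that[of a b] that[of b a] by (cases "a < b") auto
qed

lemma pos_def_Psi:
  fixes M :: "'n::{finite,linorder} \<Rightarrow> 'n \<Rightarrow> real^2^2"
  assumes N2: "CARD('n) \<ge> 2"
    and symM: "\<forall>i j. i < j \<longrightarrow> sym_mat (M i j)"
    and pdM: "\<forall>i j. i < j \<longrightarrow> pos_def (M i j)"
  shows "pos_def (Psi M)"
  unfolding pos_def_def
proof (intro conjI allI impI)
  show "sym_mat (Psi M)"
    by (rule sym_mat_Psi[OF symM])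
  fix x :: "(real, 'n) vec"
  assume "x \<noteq> 0"
  define q where "q i j = M i j $ 1 $ 1 * (x $ i)^2 + 2 * M i j $ 1 $ 2 * x $ i * x $ j
    + M i j $ 2 $ 2 * (x $ j)^2" for i j
  have minors: "M i j $ 1 $ 1 > 0" "M i j $ 1 $ 1 * M i j $ 2 $ 2 - (M i j $ 1 $ 2)^2 > 0" if "i < j" for i j
    using pos_def2_iff[of "M i j"] symM pdM that by blast+
  obtain i j where "i < j" and "x $ i \<noteq> 0 \<or> x $ j \<noteq> 0"
    using ex_pair_nonzero_component[OF N2 \<open>x \<noteq> 0\<close>] .
  then have "(i, j) \<in> pairs" and "q i j > 0"
    unfolding q_def using quadratic_form2_pos[OF minors] by (simp_all add: pairs_def)
  moreover have "q i' j' \<ge> 0" if "(i', j') \<in> pairs" for i' j'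
    using that quadratic_form2_nonneg[OF minors] unfolding q_def by (simp add: pairs_def)
  ultimately have "(\<Sum>(i, j)\<in>pairs. q i j) > 0"
    by (intro sum_pos2[of pairs "(i, j)"]) auto
  then show "x \<bullet> (Psi M *v x) > 0"
    unfolding inner_Psi_mult[OF symM] q_def .
qed

lemma sum_trace_pairs_inverse_Psi:
  fixes M :: "'n::{finite,linorder} \<Rightarrow> 'n \<Rightarrow> real^2^2"
  assumes symM: "\<forall>i j. i < j \<longrightarrow> sym_mat (M i j)"
    and S: "pos_def S" and Y: "pos_def (Psi M)" and SY: "S ** Psi M = mat 1"
  shows "(\<Sum>(i, j)\<in>pairs. S $ i $ i * M i j $ 1 $ 1 + 2 * S $ i $ j * M i j $ 1 $ 2 + S $ j $ j * M i j $ 2 $ 2)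
    = real CARD('n)"
proof -
  have "(\<Sum>b\<in>UNIV. S $ a $ b * Psi M $ a $ b) = 1" for a
    using arg_cong[OF SY, of "\<lambda>A. A $ a $ a"] pos_def_entry_sym[OF Y]
    by (simp add: matrix_matrix_mult_def mat_def)
  moreover have "(\<Sum>a\<in>UNIV. \<Sum>b\<in>UNIV. S $ a $ b * Psi M $ a $ b) =
    (\<Sum>(i, j)\<in>pairs. S $ i $ i * M i j $ 1 $ 1 + 2 * S $ i $ j * M i j $ 1 $ 2 + S $ j $ j * M i j $ 2 $ 2)"
    using sum_Psi_pairing_sym[of "\<lambda>a b. S $ a $ b" M] pos_def_entry_sym[OF S] symM by simp
  ultimately show ?thesis
    by simp
qed

lemma sum_ln_le_card_ln_mean:
  fixes f :: "'a \<Rightarrow> real"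
  assumes "finite A" and "A \<noteq> {}" and pos: "\<And>x. x \<in> A \<Longrightarrow> 0 < f x"
  shows "(\<Sum>x\<in>A. ln (f x)) \<le> card A * ln ((\<Sum>x\<in>A. f x) / card A)"
proof -
  define m where "m = (\<Sum>x\<in>A. f x) / card A"
  have card: "real (card A) > 0"
    using assms by (simp add: card_gt_0_iff)
  have sum: "(\<Sum>x\<in>A. f x) > 0"
    using assms by (simp add: sum_pos)
  have m: "m > 0"
    unfolding m_def using sum card by simp
  have "ln (f x) \<le> ln m + f x / m - 1" if "x \<in> A" for x
    using ln_le_minus_one[of "f x / m"] ln_div[of "f x" m] pos[OF that] m by simp
  then have "(\<Sum>x\<in>A. ln (f x)) \<le> (\<Sum>x\<in>A. ln m + f x / m - 1)"
    by (rule sum_mono)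
  also have "\<dots> = card A * ln m + (\<Sum>x\<in>A. f x) / m - card A"
    by (simp add: sum.distrib sum_subtractf sum_divide_distrib)
  also have "(\<Sum>x\<in>A. f x) / m = card A"
    using sum card by (simp add: m_def)
  finally show ?thesis
    unfolding m_def by simp
qed

lemma
  fixes S :: "real^'n::finite^'n" and A :: "real^2^2"
  assumes S: "pos_def S" and A: "sym_mat A" "pos_def A" and "i \<noteq> j"
  shows trace_block_pos: "S $ i $ i * A $ 1 $ 1 + 2 * S $ i $ j * A $ 1 $ 2 + S $ j $ j * A $ 2 $ 2 > 0"
    and ln_det_le_ln_trace_block: "ln (A $ 1 $ 1 * A $ 2 $ 2 - (A $ 1 $ 2)^2)
      \<le> 2 * ln (S $ i $ i * A $ 1 $ 1 + 2 * S $ i $ j * A $ 1 $ 2 + S $ j $ j * A $ 2 $ 2) - ln 4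
        - ln (S $ i $ i * S $ j $ j - (S $ i $ j)^2)"
proof -
  have "S $ i $ i > 0" "S $ i $ i * S $ j $ j - (S $ i $ j)^2 > 0"
    "A $ 1 $ 1 > 0" "A $ 1 $ 1 * A $ 2 $ 2 - (A $ 1 $ 2)^2 > 0"
    using pos_def_diag_pos[OF S] pos_def_minor2_pos[OF S \<open>i \<noteq> j\<close>] pos_def2_iff[OF A(1)] A(2) by auto
  then show "S $ i $ i * A $ 1 $ 1 + 2 * S $ i $ j * A $ 1 $ 2 + S $ j $ j * A $ 2 $ 2 > 0"
    and "ln (A $ 1 $ 1 * A $ 2 $ 2 - (A $ 1 $ 2)^2)
      \<le> 2 * ln (S $ i $ i * A $ 1 $ 1 + 2 * S $ i $ j * A $ 1 $ 2 + S $ j $ j * A $ 2 $ 2) - ln 4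
        - ln (S $ i $ i * S $ j $ j - (S $ i $ j)^2)"
    by (rule trace2_pos, rule ln_det2_le_ln_trace2)
qed

lemma sum_ln_det_le_ln_det_Psi:
  fixes M :: "'n::{finite,linorder} \<Rightarrow> 'n \<Rightarrow> real^2^2"
  assumes N2: "CARD('n) \<ge> 2"
    and symM: "\<forall>i j. i < j \<longrightarrow> sym_mat (M i j)"
    and pdM: "\<forall>i j. i < j \<longrightarrow> pos_def (M i j)"
  shows "(\<Sum>(i, j)\<in>pairs. ln (M i j $ 1 $ 1 * M i j $ 2 $ 2 - (M i j $ 1 $ 2)^2))
    \<le> (real CARD('n) - 1) * ln (det (Psi M)) - real CARD('n) * (real CARD('n) - 1) * ln (real CARD('n) - 1)"
proof -
  define n where "n = real CARD('n)"
  define K where "K = real (card (pairs :: ('n \<times> 'n) set))"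
  have n: "n \<ge> 2" and K: "K = n * (n - 1) / 2"
    using N2 card_pairs unfolding n_def K_def by simp_all
  have Y: "pos_def (Psi M)"
    by (rule pos_def_Psi[OF N2 symM pdM])
  then obtain S where SY: "S ** Psi M = mat 1" and S: "pos_def S" and ln_det_S: "ln (det S) = - ln (det (Psi M))"
    by (rule pos_def_inverse)
  define tr where "tr i j = S $ i $ i * M i j $ 1 $ 1 + 2 * S $ i $ j * M i j $ 1 $ 2 + S $ j $ j * M i j $ 2 $ 2"
    for i j
  have tr_pos: "tr i j > 0"
    and ln_bound: "ln (M i j $ 1 $ 1 * M i j $ 2 $ 2 - (M i j $ 1 $ 2)^2)
      \<le> 2 * ln (tr i j) - ln 4 - ln (S $ i $ i * S $ j $ j - (S $ i $ j)^2)"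
    if "i < j" for i j
    using trace_block_pos[OF S] ln_det_le_ln_trace_block[OF S] symM pdM that
    unfolding tr_def by auto
  have "K > 0"
    using n by (simp add: K)
  then have "(pairs :: ('n \<times> 'n) set) \<noteq> {}"
    unfolding K_def by auto
  moreover have "(\<Sum>(i, j)\<in>pairs. tr i j) = n"
    unfolding tr_def n_def by (rule sum_trace_pairs_inverse_Psi[OF symM S Y SY])
  ultimately have mean: "(\<Sum>(i, j)\<in>pairs. ln (tr i j)) \<le> K * ln (n / K)"
    using sum_ln_le_card_ln_mean[of pairs "\<lambda>(i, j). tr i j"] tr_pos
    unfolding K_def by (simp add: case_prod_beta pairs_def)
  have "n / K = 2 / (n - 1)" and "ln (4::real) = 2 * ln 2"
    using n ln_realpow[of 2 2] by (simp_all add: K)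
  then have "2 * (K * ln (n / K)) - K * ln 4 = - 2 * K * ln (n - 1)"
    using n by (simp add: ln_divide_pos algebra_simps)
  also have "\<dots> = - n * (n - 1) * ln (n - 1)"
    by (simp add: K)
  finally have constant_term: "2 * (K * ln (n / K)) - K * ln 4 = - n * (n - 1) * ln (n - 1)" .
  have "(\<Sum>(i, j)\<in>pairs. ln (M i j $ 1 $ 1 * M i j $ 2 $ 2 - (M i j $ 1 $ 2)^2))
      \<le> (\<Sum>(i, j)\<in>pairs. 2 * ln (tr i j) - ln 4 - ln (S $ i $ i * S $ j $ j - (S $ i $ j)^2))"
    by (rule sum_mono, clarify) (simp add: ln_bound pairs_def)
  also have "\<dots> = 2 * (\<Sum>(i, j)\<in>pairs. ln (tr i j)) - K * ln 4
      - (\<Sum>(i, j)\<in>pairs. ln (S $ i $ i * S $ j $ j - (S $ i $ j)^2))"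
    by (simp add: K_def sum_subtractf sum_distrib_left case_prod_beta)
  also have "\<dots> \<le> 2 * (K * ln (n / K)) - K * ln 4 - (n - 1) * ln (det S)"
    using mean szasz_inequality[OF S N2] unfolding n_def by simp
  finally show ?thesis
    unfolding constant_term ln_det_S by (simp add: n_def algebra_simps)
qed

lemma
  fixes a b d :: real
  assumes "a > \<bar>b\<bar>" and "d > \<bar>b\<bar>"
  shows diag_dominant2_pos: "a > 0 \<and> a * d - b^2 > 0"
    and ln_diag_dominant2_le_ln_det: "(1/2) * (ln (a^2 - b^2) + ln (d^2 - b^2)) \<le> ln (a * d - b^2)"
proof -
  have "\<bar>b\<bar> * \<bar>b\<bar> < a * d" and "\<bar>b\<bar> * \<bar>b\<bar> < a * a" and "\<bar>b\<bar> * \<bar>b\<bar> < d * d"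
    using assms by (intro mult_strict_mono; linarith)+
  then have pos: "a * d - b^2 > 0" "a^2 - b^2 > 0" "d^2 - b^2 > 0"
    by (simp_all add: power2_eq_square)
  then show "a > 0 \<and> a * d - b^2 > 0"
    using assms by linarith
  have "(a * d - b^2)^2 - (a^2 - b^2) * (d^2 - b^2) = b^2 * (a - d)^2"
    by (simp add: algebra_simps power2_eq_square)
  then have "(a^2 - b^2) * (d^2 - b^2) \<le> (a * d - b^2)^2"
    by (metis diff_ge_0_iff_ge zero_le_mult_iff zero_le_power2)
  then have "ln ((a^2 - b^2) * (d^2 - b^2)) \<le> ln ((a * d - b^2)^2)"
    using pos by (intro ln_mono) simp_all
  then show "(1/2) * (ln (a^2 - b^2) + ln (d^2 - b^2)) \<le> ln (a * d - b^2)"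
    using pos by (simp add: ln_mult_pos ln_realpow)
qed

lemma ball_pairs_iff: "(\<forall>(i, j)\<in>pairs. P i j) \<longleftrightarrow> (\<forall>i j. i < j \<longrightarrow> P i j)"
  unfolding pairs_def by auto

lemma phi_DD_le_phi_SDD:
  fixes M :: "'n::{finite,linorder} \<Rightarrow> 'n \<Rightarrow> real^2^2"
  assumes symM: "\<forall>i j. i < j \<longrightarrow> sym_mat (M i j)"
  shows "phi_DD M \<le> phi_SDD M"
proof (cases "\<forall>(i, j)\<in>pairs. M i j $ 1 $ 1 > \<bar>M i j $ 1 $ 2\<bar> \<and> M i j $ 2 $ 2 > \<bar>M i j $ 1 $ 2\<bar>")
  case True
  then have dd: "M i j $ 1 $ 1 > \<bar>M i j $ 1 $ 2\<bar>" "M i j $ 2 $ 2 > \<bar>M i j $ 1 $ 2\<bar>" if "i < j" for i j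
    using that unfolding ball_pairs_iff by blast+
  have "\<forall>(i, j)\<in>pairs. pos_def (M i j)"
    unfolding ball_pairs_iff using pos_def2_iff symM diag_dominant2_pos[OF dd] by blast
  moreover have "(1/2) * (\<Sum>(i, j)\<in>pairs.
        ln ((M i j $ 1 $ 1)^2 - (M i j $ 1 $ 2)^2) + ln ((M i j $ 2 $ 2)^2 - (M i j $ 1 $ 2)^2))
      \<le> (\<Sum>(i, j)\<in>pairs. ln (M i j $ 1 $ 1 * M i j $ 2 $ 2 - (M i j $ 1 $ 2)^2))"
    unfolding sum_distrib_left
  proof (rule sum_mono, clarify)
    fix i j :: 'n
    assume "(i, j) \<in> pairs"
    then show "(1/2) * (ln ((M i j $ 1 $ 1)^2 - (M i j $ 1 $ 2)^2) + ln ((M i j $ 2 $ 2)^2 - (M i j $ 1 $ 2)^2))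
      \<le> ln (M i j $ 1 $ 1 * M i j $ 2 $ 2 - (M i j $ 1 $ 2)^2)"
      using ln_diag_dominant2_le_ln_det[OF dd] by (simp add: pairs_def)
  qed
  ultimately show ?thesis
    unfolding phi_DD_def phi_SDD_def using True by simp
next
  case False
  then have "phi_DD M = -\<infinity>"
    unfolding phi_DD_def by (rule if_not_P)
  then show ?thesis by simp
qed

lemma phi_SDD_le_h_Psi:
  fixes M :: "'n::{finite,linorder} \<Rightarrow> 'n \<Rightarrow> real^2^2"
  assumes N2: "CARD('n) \<ge> 2" and symM: "\<forall>i j. i < j \<longrightarrow> sym_mat (M i j)"
  shows "phi_SDD M \<le> h (Psi M)"
proof (cases "\<forall>(i, j)\<in>pairs. pos_def (M i j)")
  case True
  then have pdM: "\<forall>i j. i < j \<longrightarrow> pos_def (M i j)"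
    unfolding ball_pairs_iff .
  have "phi_SDD M = ereal (\<Sum>(i, j)\<in>pairs. ln (M i j $ 1 $ 1 * M i j $ 2 $ 2 - (M i j $ 1 $ 2)^2))"
    using True by (simp add: phi_SDD_def)
  moreover have "h (Psi M) = ereal ((real CARD('n) - 1) * ln (det (Psi M))
      - real CARD('n) * (real CARD('n) - 1) * ln (real CARD('n) - 1))"
    using pos_def_Psi[OF N2 symM pdM] by (simp add: h_def)
  ultimately show ?thesis
    using sum_ln_det_le_ln_det_Psi[OF N2 symM pdM] by simp
next
  case False
  then have "phi_SDD M = -\<infinity>"
    unfolding phi_SDD_def by (rule if_not_P)
  then show ?thesis by simp
qed

lemma Psi_scaled_identity:
  fixes M :: "'n::{finite,linorder} \<Rightarrow> 'n \<Rightarrow> real^2^2"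
  assumes M: "\<forall>i j. i < j \<longrightarrow> M i j = c *\<^sub>R mat 1"
  shows "Psi M = ((real CARD('n) - 1) * c) *\<^sub>R mat 1"
proof -
  have "Psi M $ a $ b = (\<Sum>(i, j)\<in>pairs. if a = b then (if i = a then c else 0) + (if j = a then c else 0) else 0)"
    for a b
    unfolding Psi_def vec_lambda_beta
  proof (rule sum.cong[OF refl], clarify)
    fix i j :: 'n
    assume "(i, j) \<in> pairs"
    then have "i < j" and "M i j $ 1 $ 1 = c" "M i j $ 2 $ 2 = c" "M i j $ 1 $ 2 = 0" "M i j $ 2 $ 1 = 0"
      using M by (simp_all add: pairs_def mat_def)
    then show "(if a = i \<and> b = i then M i j $ 1 $ 1 else if a = i \<and> b = j then M i j $ 1 $ 2
      else if a = j \<and> b = i then M i j $ 2 $ 1 else if a = j \<and> b = j then M i j $ 2 $ 2 else 0)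
      = (if a = b then (if i = a then c else 0) + (if j = a then c else 0) else 0)"
      by (cases "a = i"; cases "b = i"; cases "a = j"; cases "b = j") simp_all
  qed
  then have "Psi M $ a $ b = (if a = b then (real CARD('n) - 1) * c else 0)" for a b
    using sum_pairs_vertex[of "\<lambda>k::'n. if k = a then c else 0"] by (cases "a = b") simp_all
  then show ?thesis
    by (simp add: vec_eq_iff mat_def)
qed

lemma
  fixes M :: "'n::{finite,linorder} \<Rightarrow> 'n \<Rightarrow> real^2^2"
  assumes M: "\<forall>i j. i < j \<longrightarrow> M i j = c *\<^sub>R mat 1" and c: "c > 0"
  shows phi_DD_scaled_identity: "phi_DD M = ereal (real (card (pairs :: ('n \<times> 'n) set)) * ln (c^2))"
    and phi_SDD_scaled_identity: "phi_SDD M = ereal (real (card (pairs :: ('n \<times> 'n) set)) * ln (c^2))"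
proof -
  have entries: "M i j $ 1 $ 1 = c" "M i j $ 2 $ 2 = c" "M i j $ 1 $ 2 = 0" "M i j $ 2 $ 1 = 0"
    if "(i, j) \<in> pairs" for i j
    using M that by (auto simp: pairs_def mat_def)
  have "sym_mat (M i j)" if "(i, j) \<in> pairs" for i j
    using M that by (simp add: pairs_def sym_mat_def transpose_def vec_eq_iff mat_def)
  then have "\<forall>(i, j)\<in>pairs. pos_def (M i j)"
    using entries c pos_def2_iff by auto
  moreover have "\<forall>(i, j)\<in>pairs. M i j $ 1 $ 1 > \<bar>M i j $ 1 $ 2\<bar> \<and> M i j $ 2 $ 2 > \<bar>M i j $ 1 $ 2\<bar>"
    using entries c by auto
  moreover have "(\<Sum>(i, j)\<in>pairs.
        ln ((M i j $ 1 $ 1)^2 - (M i j $ 1 $ 2)^2) + ln ((M i j $ 2 $ 2)^2 - (M i j $ 1 $ 2)^2))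
      = (\<Sum>(i, j)\<in>(pairs :: ('n \<times> 'n) set). 2 * ln (c^2))"
    and "(\<Sum>(i, j)\<in>pairs. ln (M i j $ 1 $ 1 * M i j $ 2 $ 2 - (M i j $ 1 $ 2)^2))
      = (\<Sum>(i, j)\<in>(pairs :: ('n \<times> 'n) set). ln (c^2))"
    by (rule sum.cong[OF refl], clarify, simp add: entries power2_eq_square)+
  ultimately show "phi_DD M = ereal (real (card (pairs :: ('n \<times> 'n) set)) * ln (c^2))"
    and "phi_SDD M = ereal (real (card (pairs :: ('n \<times> 'n) set)) * ln (c^2))"
    unfolding phi_DD_def phi_SDD_def by (simp_all add: case_prod_beta)
qed

lemma h_mat_1:
  "h (mat 1 :: real^'n::finite^'n) = ereal (- real CARD('n) * (real CARD('n) - 1) * ln (real CARD('n) - 1))"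
proof -
  have "pos_def (mat 1 :: real^'n^'n)"
    unfolding pos_def_def sym_mat_def by simp
  then show ?thesis
    unfolding h_def by simp
qed

theorem corollary4p5:
  fixes M :: "'n::{finite,linorder} \<Rightarrow> 'n \<Rightarrow> real^2^2"
  assumes N2: "CARD('n) \<ge> 2"
    and symM: "\<forall>i j. i < j \<longrightarrow> sym_mat (M i j)"
  shows "(Psi M \<in> DD \<longrightarrow> - phi_DD M \<ge> - phi_SDD M \<and> - phi_SDD M \<ge> - h (Psi M))
    \<and> ((\<forall>i j. i < j \<longrightarrow> M i j = (1 / (real CARD('n) - 1)) *\<^sub>R mat 1) \<longrightarrow>
        Psi M = mat 1 \<and> - phi_DD M = - phi_SDD M \<and> - phi_SDD M = - h (Psi M)
        \<and> - h (Psi M) = ereal (real CARD('n) * (real CARD('n) - 1) * ln (real CARD('n) - 1)))"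
proof (intro conjI impI)
  show "- phi_DD M \<ge> - phi_SDD M"
    using phi_DD_le_phi_SDD[OF symM] by simp
  show "- phi_SDD M \<ge> - h (Psi M)"
    using phi_SDD_le_h_Psi[OF N2 symM] by simp
next
  let ?n = "real CARD('n)"
  assume M: "\<forall>i j. i < j \<longrightarrow> M i j = (1 / (?n - 1)) *\<^sub>R mat 1"
  have n: "?n \<ge> 2"
    using N2 by simp
  have scaled_value:
    "real (card (pairs :: ('n \<times> 'n) set)) * ln ((1 / (?n - 1))^2) = - ?n * (?n - 1) * ln (?n - 1)"
    using n by (simp add: card_pairs ln_div ln_realpow)
  show "Psi M = mat 1"
    using Psi_scaled_identity[OF M] n by simp
  then show "- phi_DD M = - phi_SDD M" and "- phi_SDD M = - h (Psi M)"
    and "- h (Psi M) = ereal (?n * (?n - 1) * ln (?n - 1))"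
    using phi_DD_scaled_identity[OF M] phi_SDD_scaled_identity[OF M] h_mat_1[where 'n = 'n] scaled_value N2
    by simp_all
qed

end
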